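(* Let $s\ge1$, $\varepsilon\ge0$, let $p,p'$ be Borel probability measures on $\mathbb R^n$ with finite $s$-th moments, let $Q$ be a finite partition of $\mathbb R^n$ into Borel sets, and define $\gamma,\gamma'\in\mathcal D(Q)$ by $\gamma(q):=p(q)$, $\gamma'(q):=p'(q)$. If $\mathcal W_s(p,p')\le\varepsilon$, then $\mathcal T_c(\gamma,\gamma')\le\varepsilon^s$.
   Context: $\mathcal W_s$ is the $s$-Wasserstein distance on $\mathbb R^n$ with respect to the Euclidean norm $\|\cdot\|$: $\mathcal W_s(p,p')^s=\inf_\pi\int\|x-y\|^s\,d\pi(x,y)$ over couplings $\pi$ of $p,p'$. For $q,q'\in Q$, $c(q,q'):=\inf\{\|x-y\|^s:x\in q,y\in q'\}$, and for $\gamma,\gamma'\in\mathcal D(Q)$ (probability distributions on $Q$), $\mathcal T_c(\gamma,\gamma'):=\min_{\nu}\sum_{q,q'\in Q}c(q,q')\nu(q,q')$, the minimum over couplings $\nu$ of $\gamma$ and $\gamma'$. *)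

theory Defs
  imports "HOL-Probability.Probability"
begin

definition couplings :: "'a::euclidean_space measure \<Rightarrow> 'a measure \<Rightarrow> ('a \<times> 'a) measure set" where
  "couplings p p' = {\<pi>. sets \<pi> = sets (borel \<Otimes>\<^sub>M borel) \<and>
       distr \<pi> borel fst = p \<and> distr \<pi> borel snd = p'}"

definition wasserstein_pow :: "real \<Rightarrow> 'a::euclidean_space measure \<Rightarrow> 'a measure \<Rightarrow> ennreal" where
  "wasserstein_pow s p p' =
     (INF \<pi>\<in>couplings p p'. \<integral>\<^sup>+ z. ennreal (norm (fst z - snd z) powr s) \<partial>\<pi>)"

text \<open>The s-Wasserstein distance (finite for measures with finite s-th moments).\<close>
definition wasserstein :: "real \<Rightarrow> 'a::euclidean_space measure \<Rightarrow> 'a measure \<Rightarrow> real" where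
  "wasserstein s p p' = enn2real (wasserstein_pow s p p') powr (1 / s)"

definition finite_moment_prob :: "real \<Rightarrow> 'a::euclidean_space measure \<Rightarrow> bool" where
  "finite_moment_prob s p \<longleftrightarrow> prob_space p \<and> sets p = sets borel \<and>
     integrable p (\<lambda>x. norm x powr s)"

definition finite_borel_partition :: "'a::euclidean_space set set \<Rightarrow> bool" where
  "finite_borel_partition Q \<longleftrightarrow> finite Q \<and> {} \<notin> Q \<and> \<Union>Q = UNIV \<and>
     (\<forall>q\<in>Q. \<forall>q'\<in>Q. q \<noteq> q' \<longrightarrow> q \<inter> q' = {}) \<and> (\<forall>q\<in>Q. q \<in> sets borel)"

definition cell_cost :: "real \<Rightarrow> 'a::euclidean_space set \<Rightarrow> 'a set \<Rightarrow> real" where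
  "cell_cost s q q' = Inf {norm (x - y) powr s | x y. x \<in> q \<and> y \<in> q'}"

definition disc_couplings :: "'b set \<Rightarrow> ('b \<Rightarrow> real) \<Rightarrow> ('b \<Rightarrow> real) \<Rightarrow> ('b \<Rightarrow> 'b \<Rightarrow> real) set" where
  "disc_couplings Q \<gamma> \<gamma>' = {\<nu>. (\<forall>q\<in>Q. \<forall>q'\<in>Q. \<nu> q q' \<ge> 0) \<and>
      (\<forall>q\<in>Q. (\<Sum>q'\<in>Q. \<nu> q q') = \<gamma> q) \<and> (\<forall>q'\<in>Q. (\<Sum>q\<in>Q. \<nu> q q') = \<gamma>' q')}"

definition transport_cost :: "'b set \<Rightarrow> ('b \<Rightarrow> 'b \<Rightarrow> real) \<Rightarrow> ('b \<Rightarrow> real) \<Rightarrow> ('b \<Rightarrow> real) \<Rightarrow> real" where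
  "transport_cost Q c \<gamma> \<gamma>' =
     Inf ((\<lambda>\<nu>. \<Sum>q\<in>Q. \<Sum>q'\<in>Q. c q q' * \<nu> q q') ` disc_couplings Q \<gamma> \<gamma>')"

end

theory Submission
  imports Defs
begin

text \<open>For every coupling \<open>\<pi>\<close> of \<open>p\<close> and \<open>p'\<close>, the masses \<open>\<pi>(q \<times> q')\<close> of the cell rectangles form a
  coupling of the cell distributions. Each point \<open>(x, y)\<close> lies in exactly one rectangle
  \<open>q \<times> q'\<close>, and \<open>c(q, q') \<le> \<parallel>x - y\<parallel>\<^sup>s\<close> there, so the discrete cost of this coupling is bounded
  by the transport cost of \<open>\<pi>\<close>. Taking the infimum over \<open>\<pi>\<close> gives \<open>T\<^sub>c(\<gamma>, \<gamma>') \<le> W\<^sub>s(p, p')\<^sup>s\<close>;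
  the finite moments make \<open>W\<^sub>s(p, p')\<^sup>s\<close> finite, so this inequality passes to the real numbers.\<close>

lemma couplingsD:
  fixes \<pi> :: "('a::euclidean_space \<times> 'a) measure"
  assumes "\<pi> \<in> couplings p p'"
  shows "space \<pi> = UNIV" "fst \<in> measurable \<pi> borel" "snd \<in> measurable \<pi> borel"
    and "distr \<pi> borel fst = p" "distr \<pi> borel snd = p'"
proof -
  have sets: "sets \<pi> = sets (borel \<Otimes>\<^sub>M borel)"
    using assms by (simp add: couplings_def)
  show "space \<pi> = UNIV"
    using sets_eq_imp_space_eq[OF sets] by (simp add: space_pair_measure)
  show "fst \<in> measurable \<pi> borel" "snd \<in> measurable \<pi> borel"
    unfolding measurable_cong_sets[OF sets refl] by simp_all
  show "distr \<pi> borel fst = p" "distr \<pi> borel snd = p'"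
    using assms by (simp_all add: couplings_def)
qed

lemma measure_couplings_Times_UNIV:
  fixes \<pi> :: "('a::euclidean_space \<times> 'a) measure"
  assumes "\<pi> \<in> couplings p p'" and "A \<in> sets borel"
  shows "measure \<pi> (A \<times> UNIV) = measure p A" "measure \<pi> (UNIV \<times> A) = measure p' A"
proof -
  note \<pi> = couplingsD[OF assms(1)]
  have "measure p A = measure \<pi> (fst -` A \<inter> space \<pi>)"
    using \<pi> assms(2) by (subst \<pi>(4)[symmetric], intro measure_distr) auto
  also have "fst -` A \<inter> space \<pi> = A \<times> UNIV"
    using \<pi> by auto
  finally show "measure \<pi> (A \<times> UNIV) = measure p A" by simp
  have "measure p' A = measure \<pi> (snd -` A \<inter> space \<pi>)"
    using \<pi> assms(2) by (subst \<pi>(5)[symmetric], intro measure_distr) auto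
  also have "snd -` A \<inter> space \<pi> = UNIV \<times> A"
    using \<pi> by auto
  finally show "measure \<pi> (UNIV \<times> A) = measure p' A" by simp
qed

lemma prob_space_couplings:
  fixes \<pi> :: "('a::euclidean_space \<times> 'a) measure"
  assumes "\<pi> \<in> couplings p p'" and "prob_space p"
  shows "prob_space \<pi>"
proof (rule prob_spaceI)
  note \<pi> = couplingsD[OF assms(1)]
  have "emeasure \<pi> (space \<pi>) = emeasure (distr \<pi> borel fst) UNIV"
    using \<pi> by (subst emeasure_distr) auto
  also have "\<dots> = emeasure p (space p)"
    using \<pi>(4) by (metis space_borel space_distr)
  finally show "emeasure \<pi> (space \<pi>) = 1"
    using assms(2) by (simp add: prob_space.emeasure_space_1)
qed

lemma pair_measure_in_couplings:
  fixes p p' :: "'a::euclidean_space measure"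
  assumes "prob_space p" "prob_space p'" "sets p = sets borel" "sets p' = sets borel"
  shows "p \<Otimes>\<^sub>M p' \<in> couplings p p'"
proof -
  interpret p: prob_space p by fact
  interpret p': prob_space p' by fact
  have "distr (p \<Otimes>\<^sub>M p') borel fst = distr (p \<Otimes>\<^sub>M p') p fst"
    using assms by (intro distr_cong) auto
  moreover have "distr (p \<Otimes>\<^sub>M p') borel snd = distr (p \<Otimes>\<^sub>M p') p' snd"
    using assms by (intro distr_cong) auto
  moreover have "sets (p \<Otimes>\<^sub>M p') = sets (borel \<Otimes>\<^sub>M borel)"
    using assms by (intro sets_pair_measure_cong) auto
  moreover have "distr (p \<Otimes>\<^sub>M p') p' snd = p'"
  proof (rule measure_eqI)
    fix A assume "A \<in> sets (distr (p \<Otimes>\<^sub>M p') p' snd)"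
    then have "A \<in> sets p'" by simp
    then have "emeasure (distr (p \<Otimes>\<^sub>M p') p' snd) A = emeasure (p \<Otimes>\<^sub>M p') (space p \<times> A)"
      by (auto simp: emeasure_distr space_pair_measure dest: sets.sets_into_space
          intro!: arg_cong2[where f = emeasure])
    with \<open>A \<in> sets p'\<close> show "emeasure (distr (p \<Otimes>\<^sub>M p') p' snd) A = emeasure p' A"
      by (simp add: p'.emeasure_pair_measure_Times p.emeasure_space_1)
  qed simp
  ultimately show ?thesis
    unfolding couplings_def by (simp add: p'.distr_pair_fst)
qed

lemma norm_diff_powr_le:
  fixes x y :: "'a::real_normed_vector"
  assumes "s \<ge> 0"
  shows "norm (x - y) powr s \<le> 2 powr s * (norm x powr s + norm y powr s)"
proof -
  define m where "m = max (norm x) (norm y)"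
  have "norm (x - y) powr s \<le> (2 * m) powr s"
    using assms norm_triangle_ineq4[of x y] by (intro powr_mono2) (auto simp: m_def)
  also have "\<dots> = 2 powr s * m powr s"
    by (simp add: m_def powr_mult)
  also have "m powr s \<le> norm x powr s + norm y powr s"
    by (simp add: m_def max_def)
  finally show ?thesis by simp
qed

lemma nn_integral_couplings_cost_finite:
  fixes \<pi> :: "('a::euclidean_space \<times> 'a) measure"
  assumes "\<pi> \<in> couplings p p'" "s \<ge> 0" "finite_moment_prob s p" "finite_moment_prob s p'"
  shows "(\<integral>\<^sup>+ z. ennreal (norm (fst z - snd z) powr s) \<partial>\<pi>) < \<infinity>"
proof -
  note \<pi> = couplingsD[OF assms(1)]
  have moment: "(\<integral>\<^sup>+ z. ennreal (norm (f z) powr s) \<partial>\<pi>) < \<infinity>"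
    if "f \<in> measurable \<pi> borel" "finite_moment_prob s (distr \<pi> borel f)" for f
  proof -
    have "(\<integral>\<^sup>+ x. ennreal (norm x powr s) \<partial>distr \<pi> borel f) < \<infinity>"
      using that(2) by (simp add: finite_moment_prob_def integrable_iff_bounded)
    then show ?thesis
      using that(1) by (simp add: nn_integral_distr)
  qed
  have "(\<integral>\<^sup>+ z. ennreal (norm (fst z - snd z) powr s) \<partial>\<pi>) \<le>
        (\<integral>\<^sup>+ z. ennreal (2 powr s) * (ennreal (norm (fst z) powr s) + ennreal (norm (snd z) powr s)) \<partial>\<pi>)"
    using assms(2) by (intro nn_integral_mono)
      (simp add: ennreal_mult[symmetric] ennreal_plus[symmetric] norm_diff_powr_le del: ennreal_plus)
  also have "\<dots> = ennreal (2 powr s) *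
      ((\<integral>\<^sup>+ z. ennreal (norm (fst z) powr s) \<partial>\<pi>) + (\<integral>\<^sup>+ z. ennreal (norm (snd z) powr s) \<partial>\<pi>))"
    using \<pi>(2,3) by (simp add: nn_integral_cmult nn_integral_add)
  also have "\<dots> < \<infinity>"
    using moment[of fst] moment[of snd] \<pi> assms(3,4) by (simp add: ennreal_mult_less_top)
  finally show ?thesis .
qed

lemma wasserstein_pow_finite:
  fixes p p' :: "'a::euclidean_space measure"
  assumes "s \<ge> 0" "finite_moment_prob s p" "finite_moment_prob s p'"
  shows "wasserstein_pow s p p' < \<infinity>"
proof -
  have "p \<Otimes>\<^sub>M p' \<in> couplings p p'"
    using assms by (intro pair_measure_in_couplings) (auto simp: finite_moment_prob_def)
  then have "wasserstein_pow s p p' \<le> (\<integral>\<^sup>+ z. ennreal (norm (fst z - snd z) powr s) \<partial>(p \<Otimes>\<^sub>M p'))"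
    unfolding wasserstein_pow_def by (rule INF_lower)
  also have "\<dots> < \<infinity>"
    using \<open>p \<Otimes>\<^sub>M p' \<in> couplings p p'\<close> assms by (rule nn_integral_couplings_cost_finite)
  finally show ?thesis .
qed

lemma cell_cost_nonneg:
  assumes "q \<noteq> {}" "q' \<noteq> {}"
  shows "cell_cost s q q' \<ge> 0"
  unfolding cell_cost_def
proof (rule cInf_greatest)
  obtain x y where "x \<in> q" "y \<in> q'"
    using assms by blast
  then show "{norm (x - y) powr s |x y. x \<in> q \<and> y \<in> q'} \<noteq> {}"
    by blast
qed auto

lemma cell_cost_le:
  assumes "x \<in> q" "y \<in> q'"
  shows "cell_cost s q q' \<le> norm (x - y) powr s"
  unfolding cell_cost_def
proof (rule cInf_lower)
  show "norm (x - y) powr s \<in> {norm (x - y) powr s |x y. x \<in> q \<and> y \<in> q'}"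
    using assms by blast
  show "bdd_below {norm (x - y) powr s |x y. x \<in> q \<and> y \<in> q'}"
    by (rule bdd_belowI[where m = 0]) auto
qed

lemma sum_indicator_finite_borel_partition:
  assumes "finite_borel_partition Q" "q\<^sub>0 \<in> Q" "x \<in> q\<^sub>0"
  shows "(\<Sum>q\<in>Q. f q * indicator q x) = (f q\<^sub>0 :: 'b::semiring_1)"
proof -
  have "x \<notin> q" if "q \<in> Q - {q\<^sub>0}" for q
    using assms that unfolding finite_borel_partition_def by blast
  then have "(\<Sum>q\<in>Q - {q\<^sub>0}. f q * indicator q x) = 0"
    by (intro sum.neutral) simp
  moreover have "(\<Sum>q\<in>Q. f q * indicator q x) = f q\<^sub>0 * indicator q\<^sub>0 x + (\<Sum>q\<in>Q - {q\<^sub>0}. f q * indicator q x)"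
    using assms by (intro sum.remove) (auto simp: finite_borel_partition_def)
  ultimately show ?thesis
    using assms(3) by simp
qed

lemma sum_cell_cost_indicator_le:
  assumes "finite_borel_partition Q"
  shows "(\<Sum>q\<in>Q. \<Sum>q'\<in>Q. cell_cost s q q' * indicator (q \<times> q') (x, y)) \<le> norm (x - y) powr s"
proof -
  have "x \<in> \<Union>Q" "y \<in> \<Union>Q"
    using assms by (simp_all add: finite_borel_partition_def)
  then obtain q\<^sub>x q\<^sub>y where "q\<^sub>x \<in> Q" "x \<in> q\<^sub>x" "q\<^sub>y \<in> Q" "y \<in> q\<^sub>y"
    by blast
  have "(\<Sum>q\<in>Q. \<Sum>q'\<in>Q. cell_cost s q q' * indicator (q \<times> q') (x, y))
      = (\<Sum>q\<in>Q. (\<Sum>q'\<in>Q. cell_cost s q q' * indicator q' y) * indicator q x)"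
    by (simp add: indicator_times sum_distrib_left sum_distrib_right mult_ac)
  also have "\<dots> = cell_cost s q\<^sub>x q\<^sub>y"
    using assms \<open>q\<^sub>x \<in> Q\<close> \<open>x \<in> q\<^sub>x\<close> \<open>q\<^sub>y \<in> Q\<close> \<open>y \<in> q\<^sub>y\<close>
    by (simp add: sum_indicator_finite_borel_partition)
  also have "\<dots> \<le> norm (x - y) powr s"
    using \<open>x \<in> q\<^sub>x\<close> \<open>y \<in> q\<^sub>y\<close> by (rule cell_cost_le)
  finally show ?thesis .
qed

lemma coupling_rectangles_in_disc_couplings:
  fixes \<pi> :: "('a::euclidean_space \<times> 'a) measure"
  assumes "\<pi> \<in> couplings p p'" "prob_space p" "finite_borel_partition Q"
  shows "(\<lambda>q q'. measure \<pi> (q \<times> q')) \<in> disc_couplings Q (measure p) (measure p')"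
proof -
  interpret \<pi>: prob_space \<pi>
    using assms(1,2) by (rule prob_space_couplings)
  have sets: "sets \<pi> = sets (borel \<Otimes>\<^sub>M borel)"
    using assms(1) by (simp add: couplings_def)
  have fin: "finite Q" and cover: "\<Union>Q = UNIV" and borel: "\<And>q. q \<in> Q \<Longrightarrow> q \<in> sets borel"
    and disj: "\<And>q q'. q \<in> Q \<Longrightarrow> q' \<in> Q \<Longrightarrow> q \<noteq> q' \<Longrightarrow> q \<inter> q' = {}"
    using assms(3) unfolding finite_borel_partition_def by auto
  have row: "(\<Sum>q'\<in>Q. measure \<pi> (q \<times> q')) = measure p q" if "q \<in> Q" for q
  proof -
    have "(\<Sum>q'\<in>Q. measure \<pi> (q \<times> q')) = measure \<pi> (\<Union>q'\<in>Q. q \<times> q')"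
      using fin that borel disj sets
      by (intro \<pi>.finite_measure_finite_Union[symmetric]) (auto simp: disjoint_family_on_def)
    also have "(\<Union>q'\<in>Q. q \<times> q') = q \<times> UNIV"
      using cover by blast
    finally show ?thesis
      using measure_couplings_Times_UNIV(1)[OF assms(1) borel[OF that]] by simp
  qed
  have column: "(\<Sum>q\<in>Q. measure \<pi> (q \<times> q')) = measure p' q'" if "q' \<in> Q" for q'
  proof -
    have "(\<Sum>q\<in>Q. measure \<pi> (q \<times> q')) = measure \<pi> (\<Union>q\<in>Q. q \<times> q')"
      using fin that borel disj sets
      by (intro \<pi>.finite_measure_finite_Union[symmetric]) (auto simp: disjoint_family_on_def)
    also have "(\<Union>q\<in>Q. q \<times> q') = UNIV \<times> q'"
      using cover by blast
    finally show ?thesis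
      using measure_couplings_Times_UNIV(2)[OF assms(1) borel[OF that]] by simp
  qed
  show ?thesis
    unfolding disc_couplings_def using row column by simp
qed

lemma sum_cell_cost_measure_le_nn_integral:
  fixes \<pi> :: "('a::euclidean_space \<times> 'a) measure"
  assumes "\<pi> \<in> couplings p p'" "prob_space p" "finite_borel_partition Q"
  shows "ennreal (\<Sum>q\<in>Q. \<Sum>q'\<in>Q. cell_cost s q q' * measure \<pi> (q \<times> q'))
    \<le> (\<integral>\<^sup>+ z. ennreal (norm (fst z - snd z) powr s) \<partial>\<pi>)"
proof -
  interpret \<pi>: prob_space \<pi>
    using assms(1,2) by (rule prob_space_couplings)
  have sets: "sets \<pi> = sets (borel \<Otimes>\<^sub>M borel)"
    using assms(1) by (simp add: couplings_def)
  have rect: "\<And>q q'. q \<in> Q \<Longrightarrow> q' \<in> Q \<Longrightarrow> q \<times> q' \<in> sets \<pi>"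
    and cost_nonneg: "\<And>q q'. q \<in> Q \<Longrightarrow> q' \<in> Q \<Longrightarrow> cell_cost s q q' \<ge> 0"
    using assms(3) sets by (auto simp: finite_borel_partition_def intro!: cell_cost_nonneg)
  have "ennreal (\<Sum>q\<in>Q. \<Sum>q'\<in>Q. cell_cost s q q' * measure \<pi> (q \<times> q'))
      = (\<Sum>q\<in>Q. \<Sum>q'\<in>Q. ennreal (cell_cost s q q') * emeasure \<pi> (q \<times> q'))"
    using cost_nonneg
    by (simp add: sum_nonneg sum_ennreal[symmetric] ennreal_mult \<pi>.emeasure_eq_measure)
  also have "\<dots> = (\<integral>\<^sup>+ z. (\<Sum>q\<in>Q. \<Sum>q'\<in>Q. ennreal (cell_cost s q q') * indicator (q \<times> q') z) \<partial>\<pi>)"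
    using rect by (simp add: nn_integral_sum nn_integral_cmult_indicator)
  also have "\<dots> \<le> (\<integral>\<^sup>+ z. ennreal (norm (fst z - snd z) powr s) \<partial>\<pi>)"
  proof (rule nn_integral_mono)
    fix z :: "'a \<times> 'a"
    obtain x y where z: "z = (x, y)"
      by fastforce
    have nonneg: "0 \<le> cell_cost s q q' * indicator (q \<times> q') (x, y)" if "q \<in> Q" "q' \<in> Q" for q q'
      using cost_nonneg[OF that] by simp
    have "ennreal (cell_cost s q q') * indicator (q \<times> q') z
        = ennreal (cell_cost s q q' * indicator (q \<times> q') (x, y))" for q q'
      by (cases "z \<in> q \<times> q'") (simp_all add: z)
    then have "(\<Sum>q\<in>Q. \<Sum>q'\<in>Q. ennreal (cell_cost s q q') * indicator (q \<times> q') z)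
        = (\<Sum>q\<in>Q. \<Sum>q'\<in>Q. ennreal (cell_cost s q q' * indicator (q \<times> q') (x, y)))"
      by simp
    also have "\<dots> = ennreal (\<Sum>q\<in>Q. \<Sum>q'\<in>Q. cell_cost s q q' * indicator (q \<times> q') (x, y))"
      using nonneg by (simp add: sum_ennreal sum_nonneg)
    also have "\<dots> \<le> ennreal (norm (x - y) powr s)"
      using assms(3) by (intro ennreal_leI sum_cell_cost_indicator_le)
    finally show "(\<Sum>q\<in>Q. \<Sum>q'\<in>Q. ennreal (cell_cost s q q') * indicator (q \<times> q') z)
        \<le> ennreal (norm (fst z - snd z) powr s)"
      by (simp add: z)
  qed
  finally show ?thesis .
qed

lemma transport_cost_le:
  assumes "\<nu> \<in> disc_couplings Q \<gamma> \<gamma>'" and "\<And>q q'. q \<in> Q \<Longrightarrow> q' \<in> Q \<Longrightarrow> c q q' \<ge> 0"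
  shows "transport_cost Q c \<gamma> \<gamma>' \<le> (\<Sum>q\<in>Q. \<Sum>q'\<in>Q. c q q' * \<nu> q q')"
  unfolding transport_cost_def
proof (rule cInf_lower)
  show "(\<Sum>q\<in>Q. \<Sum>q'\<in>Q. c q q' * \<nu> q q') \<in> (\<lambda>\<nu>. \<Sum>q\<in>Q. \<Sum>q'\<in>Q. c q q' * \<nu> q q') ` disc_couplings Q \<gamma> \<gamma>'"
    using assms(1) by blast
  show "bdd_below ((\<lambda>\<nu>. \<Sum>q\<in>Q. \<Sum>q'\<in>Q. c q q' * \<nu> q q') ` disc_couplings Q \<gamma> \<gamma>')"
    using assms(2) by (intro bdd_belowI2[where m = 0] sum_nonneg mult_nonneg_nonneg)
      (auto simp: disc_couplings_def)
qed

lemma transport_cost_cell_cost_le_wasserstein_pow: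
  fixes p p' :: "'a::euclidean_space measure"
  assumes "prob_space p" "finite_borel_partition Q"
  shows "ennreal (transport_cost Q (cell_cost s) (measure p) (measure p'))
    \<le> wasserstein_pow s p p'"
  unfolding wasserstein_pow_def
proof (rule INF_greatest)
  fix \<pi> assume "\<pi> \<in> couplings p p'"
  have "\<And>q q'. q \<in> Q \<Longrightarrow> q' \<in> Q \<Longrightarrow> cell_cost s q q' \<ge> 0"
    using assms(2) by (intro cell_cost_nonneg) (auto simp: finite_borel_partition_def)
  then have "transport_cost Q (cell_cost s) (measure p) (measure p')
      \<le> (\<Sum>q\<in>Q. \<Sum>q'\<in>Q. cell_cost s q q' * measure \<pi> (q \<times> q'))"
    using \<open>\<pi> \<in> couplings p p'\<close> assms by (intro transport_cost_le coupling_rectangles_in_disc_couplings)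
  then have "ennreal (transport_cost Q (cell_cost s) (measure p) (measure p'))
      \<le> ennreal (\<Sum>q\<in>Q. \<Sum>q'\<in>Q. cell_cost s q q' * measure \<pi> (q \<times> q'))"
    by (rule ennreal_leI)
  also have "\<dots> \<le> (\<integral>\<^sup>+ z. ennreal (norm (fst z - snd z) powr s) \<partial>\<pi>)"
    using \<open>\<pi> \<in> couplings p p'\<close> assms by (rule sum_cell_cost_measure_le_nn_integral)
  finally show "ennreal (transport_cost Q (cell_cost s) (measure p) (measure p'))
      \<le> (\<integral>\<^sup>+ z. ennreal (norm (fst z - snd z) powr s) \<partial>\<pi>)" .
qed

theorem lemma2:
  fixes p p' :: "'a::euclidean_space measure" and Q :: "'a set set" and s \<epsilon> :: real
  assumes "s \<ge> 1" and "\<epsilon> \<ge> 0"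
    and "finite_moment_prob s p" and "finite_moment_prob s p'"
    and "finite_borel_partition Q"
    and "wasserstein s p p' \<le> \<epsilon>"
  shows "transport_cost Q (cell_cost s) (\<lambda>q. measure p q) (\<lambda>q. measure p' q) \<le> \<epsilon> powr s"
proof -
  define T where "T = transport_cost Q (cell_cost s) (measure p) (measure p')"
  define W where "W = wasserstein_pow s p p'"
  have "W < \<infinity>"
    using assms(1,3,4) unfolding W_def by (intro wasserstein_pow_finite) auto
  moreover have "ennreal T \<le> W"
    using assms(3,5) unfolding T_def W_def finite_moment_prob_def
    by (intro transport_cost_cell_cost_le_wasserstein_pow) auto
  ultimately have "ennreal T \<le> ennreal (enn2real W)"
    by simp
  then have "T \<le> enn2real W"
    by (simp add: ennreal_le_iff[OF enn2real_nonneg])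
  also have "\<dots> = (enn2real W powr (1 / s)) powr s"
    using assms(1) by (simp add: powr_powr enn2real_nonneg)
  also have "\<dots> \<le> \<epsilon> powr s"
    using assms(1,6) unfolding wasserstein_def W_def by (intro powr_mono2) auto
  finally show ?thesis
    unfolding T_def .
qed

end
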